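(* Under the hypotheses below, assume moreover (UPS): whenever $(x_n)\subset\mathcal{M}$ and $\beta_n\to+\infty$ satisfy $J_{\beta_n}(x_n)\to c_\infty$ and $J_{\beta_n}(\eta_{\beta_n}(x_n))\to c_\infty$, there exists $\bar x\in\mathcal{M}$ such that, up to a subsequence, $x_n\to\bar x$ and $\eta_{\beta_n}(x_n)\to\bar x$. Then $\mathcal{C}_*\cap\mathcal{K}_\infty\neq\emptyset$. More precisely, for every sequence $\beta_n\to+\infty$ and $A_n\in\mathcal{F}$ optimal for $J_{\beta_n}$ at $c_{\beta_n}$, there exists $\bar x\in\mathcal{C}_*\cap\mathcal{K}_\infty\cap\limsup_nA_n$.
   Context: Hypotheses: $(\mathcal{M},\mathrm{dist})$ is a metric space, $\mathcal{F}\subset2^{\mathcal{M}}$; $J_\beta:\mathcal{M}\to\mathbb{R}\cup\{+\infty\}$, $0<\beta<+\infty$, are lower semi-continuous with $J_{\beta_1}\le J_{\beta_2}$ for $\beta_1\le\beta_2$; $J_\infty=\sup_{\beta>0}J_\beta$; $c_\beta=\inf_{A\in\mathcal{F}}\sup_AJ_\beta\in\mathbb{R}$ for all $0<\beta\le+\infty$; every $A\in\mathcal{F}$ is closed; for every $(A_n)\subset\mathcal{F}$ such that for some $\beta$, $A_n\subset\mathcal{M}^{c_\infty+1}_\beta:=\{J_\beta\le c_\infty+1\}$ for all $n$, $\limsup_nA_n\in\mathcal{F}$ (here $\limsup_nA_n$ is the set of limits of sequences $x_{n_j}\in A_{n_j}$, $n_j\to\infty$); for each $0<\beta\le+\infty$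 a map $\eta_\beta:\mathcal{M}^{c_\infty+1}_\beta\to\mathcal{M}^{c_\infty+1}_\beta$ with $\eta_\beta(A)\in\mathcal{F}$ whenever $A\in\mathcal{F}$, $A\subset\mathcal{M}^{c_\infty+1}_\beta$, and $J_\beta(\eta_\beta(x))\le J_\beta(x)$; and for each $0<\beta\le+\infty$, every sequence $x_n$ with $J_\beta(x_n)\to c_\beta$, $J_\beta(\eta_\beta(x_n))\to c_\beta$ has a subsequence converging to a point of $\mathcal{K}_\beta=\{x:J_\beta(x)=J_\beta(\eta_\beta(x))=c_\beta\}$. A set $A$ is optimal for $J$ at $c$ if $A\in\mathcal{F}$ and $\sup_AJ=c$. $\mathcal{C}_*$ is the set of $x\in\mathcal{M}$ for which there are $(x_n)\subset\mathcal{M}$, $\beta_n\to+\infty$ with $x_n\to x$, $J_{\beta_n}(x_n)\to c_\infty$ and $J_{\beta_n}(\eta_{\beta_n}(x_n))\to c_\infty$. *)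

theory Defs
  imports "HOL-Analysis.Analysis"
begin

definition lsc :: "('a::topological_space \<Rightarrow> ereal) \<Rightarrow> bool" where
  "lsc f \<longleftrightarrow> (\<forall>t. open {x. t < f x})"

definition Jinf :: "(real \<Rightarrow> 'a \<Rightarrow> ereal) \<Rightarrow> 'a \<Rightarrow> ereal" where
  "Jinf J x = (SUP \<beta>\<in>{0<..}. J \<beta> x)"

definition minimax :: "'a set set \<Rightarrow> ('a \<Rightarrow> ereal) \<Rightarrow> ereal" where
  "minimax F f = (INF A\<in>F. SUP x\<in>A. f x)"

definition optimal :: "'a set set \<Rightarrow> ('a \<Rightarrow> ereal) \<Rightarrow> ereal \<Rightarrow> 'a set \<Rightarrow> bool" where
  "optimal F f c A \<longleftrightarrow> A \<in> F \<and> (SUP x\<in>A. f x) = c"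

text \<open>Kuratowski upper limit: limits of sequences x_j in A_(n_j), n_j tending to infinity.\<close>
definition seq_limsup :: "(nat \<Rightarrow> 'a::topological_space set) \<Rightarrow> 'a set" where
  "seq_limsup A = {x. \<exists>r y. filterlim r at_top at_top \<and> (\<forall>j. y j \<in> A (r j)) \<and> y \<longlonglongrightarrow> x}"

definition Kset :: "('a \<Rightarrow> ereal) \<Rightarrow> ('a \<Rightarrow> 'a) \<Rightarrow> ereal \<Rightarrow> 'a set" where
  "Kset f \<eta> c = {x. f x = c \<and> f (\<eta> x) = c}"

definition Cstar :: "(real \<Rightarrow> 'a \<Rightarrow> ereal) \<Rightarrow> (real \<Rightarrow> 'a \<Rightarrow> 'a) \<Rightarrow> ereal \<Rightarrow> 'a::topological_space set" where
  "Cstar J \<eta> cinf = {x. \<exists>xs \<beta>s. (\<forall>n. 0 < \<beta>s n) \<and> filterlim \<beta>s at_top sequentially \<and>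
       xs \<longlonglongrightarrow> x \<and> (\<lambda>n. J (\<beta>s n) (xs n)) \<longlonglongrightarrow> cinf \<and>
       (\<lambda>n. J (\<beta>s n) (\<eta> (\<beta>s n) (xs n))) \<longlonglongrightarrow> cinf}"

end

theory Submission
  imports Defs
begin

text \<open>Deforming the optimal sets \<open>A\<^sub>n\<close> by \<open>\<eta>\<^sub>\<beta>\<^sub>n\<close> keeps them in \<open>F\<close> and below \<open>c\<^sub>\<infinity>\<close>; their
  upper limit \<open>S\<close> is then again in \<open>F\<close>, and by lower semicontinuity and monotonicity in \<open>\<beta>\<close>
  it lies in \<open>{J\<^sub>\<infinity> \<le> c\<^sub>\<infinity>}\<close>. Since \<open>\<eta>\<^sub>\<infinity> S \<in> F\<close>, the Palais-Smale condition for \<open>J\<^sub>\<infinity>\<close> yields a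
  point \<open>x\<close> of \<open>K\<^sub>\<infinity> \<inter> S\<close>. Writing \<open>x\<close> as a limit of \<open>\<eta>\<^sub>\<beta>\<^sub>n(x\<^sub>n)\<close> with \<open>x\<^sub>n \<in> A\<^sub>n\<close>, both
  \<open>J\<^sub>\<beta>\<^sub>n(x\<^sub>n)\<close> and \<open>J\<^sub>\<beta>\<^sub>n(\<eta>\<^sub>\<beta>\<^sub>n(x\<^sub>n))\<close> are squeezed to \<open>c\<^sub>\<infinity>\<close>, so (UPS) makes \<open>x\<^sub>n\<close> converge to \<open>x\<close>
  as well; hence \<open>x \<in> C\<^sub>* \<inter> limsup A\<^sub>n\<close>. Optimal sets exist for every \<open>\<beta>\<close> because the upper limit
  of a minimising sequence in \<open>F\<close> is again in \<open>F\<close>.\<close>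

lemma lsc_le_Liminf:
  assumes "lsc f" and "y \<longlonglongrightarrow> x"
  shows "f x \<le> Liminf sequentially (\<lambda>j. f (y j))"
  unfolding le_Liminf_iff
proof (intro allI impI)
  fix t assume "t < f x"
  moreover have "open {z. t < f z}"
    using assms(1) unfolding lsc_def by blast
  ultimately have "eventually (\<lambda>j. y j \<in> {z. t < f z}) sequentially"
    by (intro topological_tendstoD[OF assms(2)]) auto
  then show "eventually (\<lambda>j. t < f (y j)) sequentially"
    by simp
qed

lemma J_le_Jinf: "0 < \<beta> \<Longrightarrow> J \<beta> x \<le> Jinf J x"
  unfolding Jinf_def by (rule SUP_upper) simp

lemma Jinf_le_Liminf:
  assumes lsc: "\<And>\<beta>. 0 < \<beta> \<Longrightarrow> lsc (J \<beta>)"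
    and mono: "\<And>\<beta>1 \<beta>2 x. 0 < \<beta>1 \<Longrightarrow> \<beta>1 \<le> \<beta>2 \<Longrightarrow> J \<beta>1 x \<le> J \<beta>2 x"
    and \<beta>s: "filterlim \<beta>s at_top sequentially"
    and y: "y \<longlonglongrightarrow> x"
  shows "Jinf J x \<le> Liminf sequentially (\<lambda>j. J (\<beta>s j) (y j))"
  unfolding Jinf_def
proof (rule SUP_least)
  fix \<beta> :: real assume "\<beta> \<in> {0<..}"
  then have "0 < \<beta>" by simp
  have "eventually (\<lambda>j. \<beta> \<le> \<beta>s j) sequentially"
    using \<beta>s unfolding filterlim_at_top by blast
  then have "eventually (\<lambda>j. J \<beta> (y j) \<le> J (\<beta>s j) (y j)) sequentially"
    by eventually_elim (rule mono[OF \<open>0 < \<beta>\<close>])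
  then have "Liminf sequentially (\<lambda>j. J \<beta> (y j)) \<le> Liminf sequentially (\<lambda>j. J (\<beta>s j) (y j))"
    by (rule Liminf_mono)
  with lsc_le_Liminf[OF lsc[OF \<open>0 < \<beta>\<close>] y] show "J \<beta> x \<le> Liminf sequentially (\<lambda>j. J (\<beta>s j) (y j))"
    by (rule order_trans)
qed

lemma tendsto_of_le_Liminf:
  fixes f :: "nat \<Rightarrow> 'a::{complete_linorder, linorder_topology}"
  assumes "L \<le> Liminf sequentially f" and "\<And>j. f j \<le> L"
  shows "f \<longlonglongrightarrow> L"
proof (rule order_tendstoI)
  show "eventually (\<lambda>j. t < f j) sequentially" if "t < L" for t
    using that assms(1) by (blast intro: less_LiminfD less_le_trans)
  show "eventually (\<lambda>j. f j < t) sequentially" if "L < t" for t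
    using that assms(2) by (blast intro: always_eventually le_less_trans)
qed

lemma Limsup_compose_le:
  fixes S :: "'b \<Rightarrow> 'a::complete_linorder"
  assumes "filterlim r G F"
  shows "Limsup F (\<lambda>j. S (r j)) \<le> Limsup G S"
  unfolding Limsup_le_iff
  using assms by (auto simp: filterlim_iff dest: Limsup_lessD)

lemma SUP_seq_limsup_le_Limsup:
  assumes "lsc f"
  shows "(SUP x\<in>seq_limsup A. f x) \<le> Limsup sequentially (\<lambda>n. SUP x\<in>A n. f x)"
proof (rule SUP_least)
  fix x assume "x \<in> seq_limsup A"
  then obtain r y where r: "filterlim r at_top at_top" and y: "\<And>j. y j \<in> A (r j)"
    and "y \<longlonglongrightarrow> x"
    unfolding seq_limsup_def by blast
  have "f x \<le> Liminf sequentially (\<lambda>j. f (y j))"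
    using assms \<open>y \<longlonglongrightarrow> x\<close> by (rule lsc_le_Liminf)
  also have "\<dots> \<le> Liminf sequentially (\<lambda>j. SUP x\<in>A (r j). f x)"
    using y by (intro Liminf_mono always_eventually allI SUP_upper)
  also have "\<dots> \<le> Limsup sequentially (\<lambda>j. SUP x\<in>A (r j). f x)"
    by (simp add: Liminf_le_Limsup)
  also have "\<dots> \<le> Limsup sequentially (\<lambda>n. SUP x\<in>A n. f x)"
    using r by (rule Limsup_compose_le)
  finally show "f x \<le> Limsup sequentially (\<lambda>n. SUP x\<in>A n. f x)" .
qed

lemma minimax_mono: "(\<And>x. f x \<le> g x) \<Longrightarrow> minimax F f \<le> minimax F g"
  unfolding minimax_def by (intro INF_mono' SUP_mono')

lemma minimax_le_SUP: "A \<in> F \<Longrightarrow> minimax F f \<le> (SUP x\<in>A. f x)"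
  unfolding minimax_def by (rule INF_lower)

lemma optimal_set_exists:
  assumes lsc: "lsc f" and finite: "\<bar>minimax F f\<bar> \<noteq> \<infinity>"
    and b: "minimax F f + 1 \<le> b"
    and F_limsup: "\<And>A. \<forall>n. A n \<in> F \<and> A n \<subseteq> {x. f x \<le> b} \<Longrightarrow> seq_limsup A \<in> F"
  shows "\<exists>A. optimal F f (minimax F f) A"
proof -
  obtain c where c: "minimax F f = ereal c"
    using finite by (cases "minimax F f") auto
  define g where "g n = ereal (c + inverse (real (Suc n)))" for n
  have "minimax F f < g n" for n
    unfolding c g_def by simp
  then have "\<exists>B\<in>F. (SUP x\<in>B. f x) < g n" for n
    unfolding minimax_def by (simp add: INF_less_iff)
  then obtain B where BF: "\<And>n. B n \<in> F" and B: "\<And>n. (SUP x\<in>B n. f x) < g n"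
    by metis
  have "B n \<subseteq> {x. f x \<le> b}" for n
  proof
    fix x assume "x \<in> B n"
    then have "f x \<le> g n"
      using B[of n] by (blast intro: SUP_upper order.strict_implies_order order_trans)
    also have "g n \<le> minimax F f + 1"
      unfolding g_def c by (simp add: inverse_le_1_iff)
    finally show "x \<in> {x. f x \<le> b}"
      using b by simp
  qed
  with BF have limsup_F: "seq_limsup B \<in> F"
    by (blast intro: F_limsup)
  have "g \<longlonglongrightarrow> ereal c"
    unfolding g_def using tendsto_add[OF tendsto_const LIMSEQ_inverse_real_of_nat, of c]
    by (intro tendsto_ereal) simp
  then have "Limsup sequentially g = minimax F f"
    by (simp add: c lim_imp_Limsup)
  moreover have "Limsup sequentially (\<lambda>n. SUP x\<in>B n. f x) \<le> Limsup sequentially g"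
    using B by (intro Limsup_mono always_eventually allI less_imp_le)
  ultimately have "(SUP x\<in>seq_limsup B. f x) \<le> minimax F f"
    using SUP_seq_limsup_le_Limsup[OF lsc, of B] by simp
  then have "(SUP x\<in>seq_limsup B. f x) = minimax F f"
    using minimax_le_SUP[OF limsup_F, of f] by (rule antisym)
  with limsup_F show ?thesis
    unfolding optimal_def by blast
qed

lemma closed_sublevel_meets_Kset:
  assumes finite: "\<bar>minimax F f\<bar> \<noteq> \<infinity>" and "closed S"
    and S_le: "\<And>x. x \<in> S \<Longrightarrow> f x \<le> minimax F f"
    and image_F: "\<eta> ` S \<in> F"
    and decr: "\<And>x. x \<in> S \<Longrightarrow> f (\<eta> x) \<le> f x"
    and PS: "\<And>xs. (\<lambda>n. f (xs n)) \<longlonglongrightarrow> minimax F f \<Longrightarrow> (\<lambda>n. f (\<eta> (xs n))) \<longlonglongrightarrow> minimax F f \<Longrightarrow>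
               \<exists>r x. strict_mono r \<and> (xs \<circ> r) \<longlonglongrightarrow> x \<and> x \<in> Kset f \<eta> (minimax F f)"
  shows "S \<inter> Kset f \<eta> (minimax F f) \<noteq> {}"
proof -
  obtain c where c: "minimax F f = ereal c"
    using finite by (cases "minimax F f") auto
  define g where "g k = ereal (c - inverse (real (Suc k)))" for k
  have "g k < minimax F f" for k
    unfolding c g_def by simp
  also have "minimax F f \<le> (SUP x\<in>S. f (\<eta> x))"
    using minimax_le_SUP[OF image_F, of f] by (simp add: image_image)
  finally have "\<exists>x\<in>S. g k < f (\<eta> x)" for k
    by (simp add: less_SUP_iff)
  then obtain z where zS: "\<And>k. z k \<in> S" and z: "\<And>k. g k < f (\<eta> (z k))"
    by metis
  have "g \<longlonglongrightarrow> minimax F f"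
    unfolding g_def c using tendsto_diff[OF tendsto_const LIMSEQ_inverse_real_of_nat, of c]
    by (intro tendsto_ereal) simp
  moreover have "f (\<eta> (z k)) \<le> minimax F f" "f (z k) \<le> minimax F f" for k
    using order_trans[OF decr S_le] S_le zS by blast+
  moreover have "g k \<le> f (\<eta> (z k))" "g k \<le> f (z k)" for k
    using z[of k] order.strict_trans2[OF z decr[OF zS]] by (simp_all add: less_imp_le)
  ultimately have "(\<lambda>k. f (\<eta> (z k))) \<longlonglongrightarrow> minimax F f" "(\<lambda>k. f (z k)) \<longlonglongrightarrow> minimax F f"
    by (auto intro!: tendsto_sandwich[OF _ _ _ tendsto_const, of g])
  then obtain r x where "strict_mono r" "(z \<circ> r) \<longlonglongrightarrow> x" "x \<in> Kset f \<eta> (minimax F f)"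
    using PS by blast
  moreover have "x \<in> S"
    using closed_sequentially[OF \<open>closed S\<close> _ \<open>(z \<circ> r) \<longlonglongrightarrow> x\<close>] zS by simp
  ultimately show ?thesis
    by blast
qed

lemma positive_lower_bound_at_top:
  fixes \<beta>s :: "nat \<Rightarrow> real"
  assumes pos: "\<And>n. 0 < \<beta>s n" and lim: "filterlim \<beta>s at_top sequentially"
  shows "\<exists>\<beta>0>0. \<forall>n. \<beta>0 \<le> \<beta>s n"
proof -
  obtain N where N: "\<And>n. N \<le> n \<Longrightarrow> 1 \<le> \<beta>s n"
    using lim unfolding filterlim_at_top eventually_sequentially by blast
  define \<beta>0 where "\<beta>0 = Min (insert 1 (\<beta>s ` {..<N}))"
  have "\<beta>0 \<le> \<beta>s n" for n
  proof (cases "n < N")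
    case True
    then show ?thesis unfolding \<beta>0_def by (intro Min_le) auto
  next
    case False
    have "\<beta>0 \<le> 1" unfolding \<beta>0_def by (intro Min_le) auto
    also have "1 \<le> \<beta>s n" using N False by simp
    finally show ?thesis .
  qed
  moreover have "0 < \<beta>0"
    unfolding \<beta>0_def using pos by simp
  ultimately show ?thesis
    by blast
qed

locale deformation_family =
  fixes F :: "'a::metric_space set set"
    and J :: "real \<Rightarrow> 'a \<Rightarrow> ereal"
    and \<eta> :: "real \<Rightarrow> 'a \<Rightarrow> 'a"
    and \<eta>inf :: "'a \<Rightarrow> 'a"
    and cinf :: ereal
  assumes cinf_def: "cinf = minimax F (Jinf J)"
    and cinf_finite: "\<bar>cinf\<bar> \<noteq> \<infinity>"
    and lsc: "\<And>\<beta>. 0 < \<beta> \<Longrightarrow> lsc (J \<beta>)"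
    and mono: "\<And>\<beta>1 \<beta>2 x. 0 < \<beta>1 \<Longrightarrow> \<beta>1 \<le> \<beta>2 \<Longrightarrow> J \<beta>1 x \<le> J \<beta>2 x"
    and F_closed: "\<And>A. A \<in> F \<Longrightarrow> closed A"
    and F_limsup: "\<And>A \<beta>. 0 < \<beta> \<Longrightarrow> (\<forall>n. A n \<in> F \<and> A n \<subseteq> {x. J \<beta> x \<le> cinf + 1})
                      \<Longrightarrow> seq_limsup A \<in> F"
    and eta_F: "\<And>\<beta> A. 0 < \<beta> \<Longrightarrow> A \<in> F \<Longrightarrow> A \<subseteq> {x. J \<beta> x \<le> cinf + 1} \<Longrightarrow> \<eta> \<beta> ` A \<in> F"
    and eta_decr: "\<And>\<beta> x. 0 < \<beta> \<Longrightarrow> J \<beta> x \<le> cinf + 1 \<Longrightarrow> J \<beta> (\<eta> \<beta> x) \<le> J \<beta> x"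
    and etainf_F: "\<And>A. A \<in> F \<Longrightarrow> A \<subseteq> {x. Jinf J x \<le> cinf + 1} \<Longrightarrow> \<eta>inf ` A \<in> F"
    and etainf_decr: "\<And>x. Jinf J x \<le> cinf + 1 \<Longrightarrow> Jinf J (\<eta>inf x) \<le> Jinf J x"
    and PS_inf: "\<And>xs. (\<lambda>n. Jinf J (xs n)) \<longlonglongrightarrow> cinf \<Longrightarrow>
               (\<lambda>n. Jinf J (\<eta>inf (xs n))) \<longlonglongrightarrow> cinf \<Longrightarrow>
               \<exists>r x. strict_mono r \<and> (xs \<circ> r) \<longlonglongrightarrow> x \<and> x \<in> Kset (Jinf J) \<eta>inf cinf"
    and UPS: "\<And>xs \<beta>s. (\<forall>n. 0 < \<beta>s n) \<Longrightarrow> filterlim \<beta>s at_top sequentially \<Longrightarrow>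
               (\<lambda>n. J (\<beta>s n) (xs n)) \<longlonglongrightarrow> cinf \<Longrightarrow>
               (\<lambda>n. J (\<beta>s n) (\<eta> (\<beta>s n) (xs n))) \<longlonglongrightarrow> cinf \<Longrightarrow>
               \<exists>xbar r. strict_mono r \<and> (xs \<circ> r) \<longlonglongrightarrow> xbar \<and>
                        (\<lambda>n. \<eta> (\<beta>s (r n)) (xs (r n))) \<longlonglongrightarrow> xbar"
begin

lemma cinf_le_cinf_plus_1: "cinf \<le> cinf + 1"
  using cinf_finite by (cases cinf) auto

lemma minimax_le_cinf: "0 < \<beta> \<Longrightarrow> minimax F (J \<beta>) \<le> cinf"
  unfolding cinf_def by (intro minimax_mono J_le_Jinf)

lemma optimal_set_exists_at:
  assumes "0 < \<beta>" and "\<bar>minimax F (J \<beta>)\<bar> \<noteq> \<infinity>"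
  shows "\<exists>A. optimal F (J \<beta>) (minimax F (J \<beta>)) A"
proof (rule optimal_set_exists[OF lsc[OF \<open>0 < \<beta>\<close>] assms(2)])
  show "minimax F (J \<beta>) + 1 \<le> cinf + 1"
    using minimax_le_cinf[OF \<open>0 < \<beta>\<close>] by (simp add: add_right_mono)
qed (use F_limsup \<open>0 < \<beta>\<close> in blast)

lemma optimal_set_le_cinf:
  assumes "0 < \<beta>" and "optimal F (J \<beta>) (minimax F (J \<beta>)) A" and "x \<in> A"
  shows "J \<beta> x \<le> cinf"
proof -
  have "J \<beta> x \<le> (SUP x\<in>A. J \<beta> x)"
    using \<open>x \<in> A\<close> by (rule SUP_upper)
  also have "\<dots> \<le> cinf"
    using assms(2) minimax_le_cinf[OF \<open>0 < \<beta>\<close>] unfolding optimal_def by simp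
  finally show ?thesis .
qed

lemma Kset_inf_meets:
  assumes SF: "S \<in> F" and S_le: "\<And>y. y \<in> S \<Longrightarrow> Jinf J y \<le> cinf"
  shows "S \<inter> Kset (Jinf J) \<eta>inf cinf \<noteq> {}"
proof (rule closed_sublevel_meets_Kset[where F = F and f = "Jinf J", folded cinf_def])
  show "closed S"
    using F_closed[OF SF] .
  have S_sub: "S \<subseteq> {x. Jinf J x \<le> cinf + 1}"
    using S_le cinf_le_cinf_plus_1 by (blast intro: order_trans)
  then show "\<eta>inf ` S \<in> F"
    using etainf_F[OF SF] by blast
  show "Jinf J (\<eta>inf x) \<le> Jinf J x" if "x \<in> S" for x
    using etainf_decr S_sub that by blast
qed (fact cinf_finite S_le PS_inf)+

lemma seq_limsup_deformed_sets:
  assumes pos: "\<And>n. 0 < \<beta>s n" and lim: "filterlim \<beta>s at_top sequentially"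
    and AF: "\<And>n. A n \<in> F" and AJ: "\<And>n x. x \<in> A n \<Longrightarrow> J (\<beta>s n) x \<le> cinf"
  shows "seq_limsup (\<lambda>n. \<eta> (\<beta>s n) ` A n) \<in> F"
    and "\<And>y. y \<in> seq_limsup (\<lambda>n. \<eta> (\<beta>s n) ` A n) \<Longrightarrow> Jinf J y \<le> cinf"
proof -
  define D where "D n = \<eta> (\<beta>s n) ` A n" for n
  have A_sub: "A n \<subseteq> {x. J (\<beta>s n) x \<le> cinf + 1}" for n
    using AJ cinf_le_cinf_plus_1 by (blast intro: order_trans)
  have DF: "D n \<in> F" for n
    unfolding D_def using eta_F[OF pos AF A_sub] .
  have DJ: "J (\<beta>s n) y \<le> cinf" if "y \<in> D n" for n y
    using that A_sub AJ unfolding D_def by (blast intro: order_trans eta_decr[OF pos])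
  obtain \<beta>0 where "0 < \<beta>0" and \<beta>0: "\<And>n. \<beta>0 \<le> \<beta>s n"
    using positive_lower_bound_at_top[OF pos lim] by blast
  have "D n \<subseteq> {x. J \<beta>0 x \<le> cinf + 1}" for n
    using mono[OF \<open>0 < \<beta>0\<close> \<beta>0] DJ cinf_le_cinf_plus_1 by (blast intro: order_trans)
  with DF show "seq_limsup (\<lambda>n. \<eta> (\<beta>s n) ` A n) \<in> F"
    unfolding D_def[symmetric] using F_limsup[OF \<open>0 < \<beta>0\<close>] by blast
  fix y assume "y \<in> seq_limsup (\<lambda>n. \<eta> (\<beta>s n) ` A n)"
  then obtain r w where r: "filterlim r at_top at_top" and w: "\<And>j. w j \<in> D (r j)"
    and "w \<longlonglongrightarrow> y"
    unfolding seq_limsup_def D_def[symmetric] by blast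
  have "Jinf J y \<le> Liminf sequentially (\<lambda>j. J (\<beta>s (r j)) (w j))"
    using Jinf_le_Liminf[of J, OF lsc mono filterlim_compose[OF lim r] \<open>w \<longlonglongrightarrow> y\<close>] by simp
  also have "\<dots> \<le> cinf"
    using DJ w by (intro Liminf_le always_eventually allI) simp_all
  finally show "Jinf J y \<le> cinf" .
qed


lemma deformed_limit_in_Cstar:
  assumes pos: "\<And>j. 0 < \<beta>s j" and lim: "filterlim \<beta>s at_top sequentially"
    and xs: "\<And>j. J (\<beta>s j) (xs j) \<le> cinf"
    and conv: "(\<lambda>j. \<eta> (\<beta>s j) (xs j)) \<longlonglongrightarrow> z" and z: "Jinf J z = cinf"
  shows "\<exists>r. strict_mono r \<and> (xs \<circ> r) \<longlonglongrightarrow> z \<and> z \<in> Cstar J \<eta> cinf"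
proof -
  have decr: "J (\<beta>s j) (\<eta> (\<beta>s j) (xs j)) \<le> J (\<beta>s j) (xs j)" for j
    using xs cinf_le_cinf_plus_1 by (blast intro: eta_decr[OF pos] order_trans)
  have "cinf \<le> Liminf sequentially (\<lambda>j. J (\<beta>s j) (\<eta> (\<beta>s j) (xs j)))"
    using Jinf_le_Liminf[of J, OF lsc mono lim conv] z by simp
  then have eta_lim: "(\<lambda>j. J (\<beta>s j) (\<eta> (\<beta>s j) (xs j))) \<longlonglongrightarrow> cinf"
    using decr xs by (blast intro: tendsto_of_le_Liminf order_trans)
  have xs_lim: "(\<lambda>j. J (\<beta>s j) (xs j)) \<longlonglongrightarrow> cinf"
    using decr xs by (intro tendsto_sandwich[OF _ _ eta_lim tendsto_const] always_eventually allI)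
  obtain xbar r where r: "strict_mono r" and "(xs \<circ> r) \<longlonglongrightarrow> xbar"
    and "(\<lambda>j. \<eta> (\<beta>s (r j)) (xs (r j))) \<longlonglongrightarrow> xbar"
    using UPS[OF _ lim xs_lim eta_lim] pos by blast
  moreover have "(\<lambda>j. \<eta> (\<beta>s (r j)) (xs (r j))) \<longlonglongrightarrow> z"
    using LIMSEQ_subseq_LIMSEQ[OF conv r] by (simp add: o_def)
  ultimately have xs_r: "(xs \<circ> r) \<longlonglongrightarrow> z"
    using LIMSEQ_unique by blast
  have "z \<in> Cstar J \<eta> cinf"
    unfolding Cstar_def
  proof (intro CollectI exI conjI allI)
    show "filterlim (\<lambda>j. \<beta>s (r j)) at_top sequentially"
      using filterlim_compose[OF lim filterlim_subseq[OF r]] .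
    show "(\<lambda>j. J (\<beta>s (r j)) ((xs \<circ> r) j)) \<longlonglongrightarrow> cinf"
      using LIMSEQ_subseq_LIMSEQ[OF xs_lim r] by (simp add: o_def)
    show "(\<lambda>j. J (\<beta>s (r j)) (\<eta> (\<beta>s (r j)) ((xs \<circ> r) j))) \<longlonglongrightarrow> cinf"
      using LIMSEQ_subseq_LIMSEQ[OF eta_lim r] by (simp add: o_def)
  qed (use pos xs_r in \<open>auto simp: o_def\<close>)
  with r xs_r show ?thesis
    by blast
qed

lemma limit_point_of_optimal_sets:
  assumes pos: "\<And>n. 0 < \<beta>s n" and lim: "filterlim \<beta>s at_top sequentially"
    and opt: "\<And>n. optimal F (J (\<beta>s n)) (minimax F (J (\<beta>s n))) (A n)"
  shows "\<exists>x. x \<in> Cstar J \<eta> cinf \<inter> Kset (Jinf J) \<eta>inf cinf \<inter> seq_limsup A"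
proof -
  have AF: "A n \<in> F" for n
    using opt unfolding optimal_def by blast
  have AJ: "J (\<beta>s n) x \<le> cinf" if "x \<in> A n" for n x
    using optimal_set_le_cinf[OF pos opt that] .
  define S where "S = seq_limsup (\<lambda>n. \<eta> (\<beta>s n) ` A n)"
  have SF: "S \<in> F" and S_le: "\<And>y. y \<in> S \<Longrightarrow> Jinf J y \<le> cinf"
    unfolding S_def using seq_limsup_deformed_sets[of \<beta>s A, OF pos lim AF AJ] by blast+
  have "S \<inter> Kset (Jinf J) \<eta>inf cinf \<noteq> {}"
    using SF S_le by (rule Kset_inf_meets)
  then obtain z where "z \<in> S" and zK: "z \<in> Kset (Jinf J) \<eta>inf cinf"
    by blast
  then obtain r w where r: "filterlim r at_top at_top"
    and w: "\<And>j. w j \<in> \<eta> (\<beta>s (r j)) ` A (r j)" and "w \<longlonglongrightarrow> z"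
    unfolding S_def seq_limsup_def by blast
  then have "\<forall>j. \<exists>x. x \<in> A (r j) \<and> w j = \<eta> (\<beta>s (r j)) x"
    by blast
  then obtain xs where xs: "\<And>j. xs j \<in> A (r j)" and w_eq: "\<And>j. w j = \<eta> (\<beta>s (r j)) (xs j)"
    by metis
  have "w = (\<lambda>j. \<eta> (\<beta>s (r j)) (xs j))"
    using w_eq by blast
  moreover have "Jinf J z = cinf"
    using zK unfolding Kset_def by blast
  ultimately obtain r' where r': "strict_mono r'" and "(xs \<circ> r') \<longlonglongrightarrow> z" and "z \<in> Cstar J \<eta> cinf"
    using deformed_limit_in_Cstar[OF pos filterlim_compose[OF lim r] AJ[OF xs]] \<open>w \<longlonglongrightarrow> z\<close>
    by blast
  moreover have "z \<in> seq_limsup A"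
    unfolding seq_limsup_def
  proof (intro CollectI exI conjI allI)
    show "filterlim (\<lambda>j. r (r' j)) at_top at_top"
      using filterlim_compose[OF r filterlim_subseq[OF r']] .
  qed (use xs \<open>(xs \<circ> r') \<longlonglongrightarrow> z\<close> in auto)
  ultimately show ?thesis
    using zK by blast
qed

end

theorem theorem2p11:
  fixes F :: "'a::metric_space set set"
    and J :: "real \<Rightarrow> 'a \<Rightarrow> ereal"
    and \<eta> :: "real \<Rightarrow> 'a \<Rightarrow> 'a"
    and \<eta>inf :: "'a \<Rightarrow> 'a"
  defines "c \<equiv> \<lambda>\<beta>. minimax F (J \<beta>)"
    and "cinf \<equiv> minimax F (Jinf J)"
  assumes lsc: "\<And>\<beta>. 0 < \<beta> \<Longrightarrow> lsc (J \<beta>)"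
    and not_minf: "\<And>\<beta> x. 0 < \<beta> \<Longrightarrow> J \<beta> x \<noteq> -\<infinity>"
    and mono: "\<And>\<beta>1 \<beta>2 x. 0 < \<beta>1 \<Longrightarrow> \<beta>1 \<le> \<beta>2 \<Longrightarrow> J \<beta>1 x \<le> J \<beta>2 x"
    and c_real: "\<And>\<beta>. 0 < \<beta> \<Longrightarrow> \<bar>c \<beta>\<bar> \<noteq> \<infinity>"
    and cinf_real: "\<bar>cinf\<bar> \<noteq> \<infinity>"
    and F_closed: "\<And>A. A \<in> F \<Longrightarrow> closed A"
    and F_limsup: "\<And>A \<beta>. 0 < \<beta> \<Longrightarrow> (\<forall>n. A n \<in> F \<and> A n \<subseteq> {x. J \<beta> x \<le> cinf + 1})
                      \<Longrightarrow> seq_limsup A \<in> F"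
    and F_limsup_inf: "\<And>A. (\<forall>n. A n \<in> F \<and> A n \<subseteq> {x. Jinf J x \<le> cinf + 1})
                      \<Longrightarrow> seq_limsup A \<in> F"
    and eta_maps: "\<And>\<beta> x. 0 < \<beta> \<Longrightarrow> J \<beta> x \<le> cinf + 1 \<Longrightarrow> J \<beta> (\<eta> \<beta> x) \<le> cinf + 1"
    and eta_F: "\<And>\<beta> A. 0 < \<beta> \<Longrightarrow> A \<in> F \<Longrightarrow> A \<subseteq> {x. J \<beta> x \<le> cinf + 1} \<Longrightarrow> \<eta> \<beta> ` A \<in> F"
    and eta_decr: "\<And>\<beta> x. 0 < \<beta> \<Longrightarrow> J \<beta> x \<le> cinf + 1 \<Longrightarrow> J \<beta> (\<eta> \<beta> x) \<le> J \<beta> x"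
    and etainf_maps: "\<And>x. Jinf J x \<le> cinf + 1 \<Longrightarrow> Jinf J (\<eta>inf x) \<le> cinf + 1"
    and etainf_F: "\<And>A. A \<in> F \<Longrightarrow> A \<subseteq> {x. Jinf J x \<le> cinf + 1} \<Longrightarrow> \<eta>inf ` A \<in> F"
    and etainf_decr: "\<And>x. Jinf J x \<le> cinf + 1 \<Longrightarrow> Jinf J (\<eta>inf x) \<le> Jinf J x"
    and PS: "\<And>\<beta> xs. 0 < \<beta> \<Longrightarrow> (\<lambda>n. J \<beta> (xs n)) \<longlonglongrightarrow> c \<beta> \<Longrightarrow>
               (\<lambda>n. J \<beta> (\<eta> \<beta> (xs n))) \<longlonglongrightarrow> c \<beta> \<Longrightarrow>
               \<exists>r x. strict_mono r \<and> (xs \<circ> r) \<longlonglongrightarrow> x \<and> x \<in> Kset (J \<beta>) (\<eta> \<beta>) (c \<beta>)"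
    and PS_inf: "\<And>xs. (\<lambda>n. Jinf J (xs n)) \<longlonglongrightarrow> cinf \<Longrightarrow>
               (\<lambda>n. Jinf J (\<eta>inf (xs n))) \<longlonglongrightarrow> cinf \<Longrightarrow>
               \<exists>r x. strict_mono r \<and> (xs \<circ> r) \<longlonglongrightarrow> x \<and> x \<in> Kset (Jinf J) \<eta>inf cinf"
    and UPS: "\<And>xs \<beta>s. (\<forall>n. 0 < \<beta>s n) \<Longrightarrow> filterlim \<beta>s at_top sequentially \<Longrightarrow>
               (\<lambda>n. J (\<beta>s n) (xs n)) \<longlonglongrightarrow> cinf \<Longrightarrow>
               (\<lambda>n. J (\<beta>s n) (\<eta> (\<beta>s n) (xs n))) \<longlonglongrightarrow> cinf \<Longrightarrow>
               \<exists>xbar r. strict_mono r \<and> (xs \<circ> r) \<longlonglongrightarrow> xbar \<and>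
                        (\<lambda>n. \<eta> (\<beta>s (r n)) (xs (r n))) \<longlonglongrightarrow> xbar"
  shows "Cstar J \<eta> cinf \<inter> Kset (Jinf J) \<eta>inf cinf \<noteq> {} \<and>
         (\<forall>\<beta>s A. (\<forall>n. 0 < \<beta>s n) \<longrightarrow> filterlim \<beta>s at_top sequentially \<longrightarrow>
            (\<forall>n. optimal F (J (\<beta>s n)) (c (\<beta>s n)) (A n)) \<longrightarrow>
            (\<exists>xbar. xbar \<in> Cstar J \<eta> cinf \<inter> Kset (Jinf J) \<eta>inf cinf \<inter> seq_limsup A))"
proof -
  \<comment> \<open>Not needed: \<open>not_minf\<close>, \<open>eta_maps\<close>, \<open>etainf_maps\<close>, \<open>F_limsup_inf\<close> and the
    Palais-Smale condition \<open>PS\<close> at finite \<open>\<beta>\<close>.\<close>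
  interpret deformation_family F J \<eta> \<eta>inf cinf
    by unfold_locales
      (fact cinf_def[THEN meta_eq_to_obj_eq] cinf_real lsc mono F_closed F_limsup eta_F eta_decr
         etainf_F etainf_decr PS_inf UPS)+
  have main: "\<exists>xbar. xbar \<in> Cstar J \<eta> cinf \<inter> Kset (Jinf J) \<eta>inf cinf \<inter> seq_limsup A"
    if "\<forall>n. 0 < \<beta>s n" "filterlim \<beta>s at_top sequentially"
      "\<forall>n. optimal F (J (\<beta>s n)) (c (\<beta>s n)) (A n)" for \<beta>s A
    by (intro limit_point_of_optimal_sets) (use that in \<open>auto simp: c_def\<close>)
  define \<beta>s :: "nat \<Rightarrow> real" where "\<beta>s n = real (Suc n)" for n
  have pos: "\<forall>n. 0 < \<beta>s n"
    unfolding \<beta>s_def by simp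
  have lim: "filterlim \<beta>s at_top sequentially"
    unfolding \<beta>s_def by (subst filterlim_sequentially_Suc) (rule filterlim_real_sequentially)
  have "\<forall>n. \<exists>A. optimal F (J (\<beta>s n)) (c (\<beta>s n)) A"
    using optimal_set_exists_at pos c_real by (simp add: c_def)
  then obtain A where "\<forall>n. optimal F (J (\<beta>s n)) (c (\<beta>s n)) (A n)"
    by metis
  then have "Cstar J \<eta> cinf \<inter> Kset (Jinf J) \<eta>inf cinf \<noteq> {}"
    using main[OF pos lim] by blast
  with main show ?thesis
    by (intro conjI allI impI)
qed

end
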